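(* Let $\bar x:[0,\infty)\to(0,1]$ be the solution of $\bar x'(t)=-\bar x^2(t)-(1-\bar x^2(t))\bar x(t)$, $\bar x(0)=1$, and consider the system $$\bar s_2'=\bar x^2+(1-\bar x^2)\bar s_2^2,\qquad \bar s_3'=3\bar x^2+3(1-\bar x^2)\bar s_2\bar s_3,\qquad \bar s_4'=7\bar x^2+(1-\bar x^2)\bigl(4\bar s_2\bar s_4+3\bar s_3^2\bigr),$$ with $\bar s_2(0)=\bar s_3(0)=\bar s_4(0)=1$. Let $t_c\in(0,\infty)$ be the explosion time of $\bar s_2$, i.e. $\bar s_2$ is defined on $[0,t_c)$ and $\bar s_2(t)\to+\infty$ as $t\uparrow t_c$. Then $\bar s_2,\bar s_3,\bar s_4$ are uniquely defined on $[0,t_c)$, and as $t\uparrow t_c$ there exist positive constants $\alpha,\beta$ such that $$\bar s_2(t)\sim\frac{\alpha}{t_c-t},\qquad \bar s_3(t)\sim\beta\,\bar s_2(t)^3\sim\frac{\beta\alpha^3}{(t_c-t)^3},\qquad \bar s_4(t)\sim 3\beta^2\bar s_2(t)^5\sim\frac{3\beta^2\alpha^5}{(t_c-t)^5}.$$ More precisely, $\bar s_k(t)=\gamma_k(t_c-t)^{-(2k-3)}\bigl(1+O(t_c-t)\bigr)$ for $k=2,3,4$, with $\gamma_2=\alpha$, $\gamma_3=\beta\alpha^3$, $\gamma_4=3\beta^2\alpha^5$. Here $\alpha=(1-\bar x^2(t_c))^{-1}$ and $\beta=g(t_c)$, where $g$ is defined as follows: let $f$ be the solution of $f'=-\bar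 x^2 f^2-(1-\bar x^2)$, $f(0)=1$ (so that $f=1/\bar s_2$ on $[0,t_c)$ and $f(t_c)=0$), and let $g$ be the solution of $g'=3\bar x^2 f^3-3\bar x^2 f g$, $g(0)=1$, i.e. $g(t)=e^{-G(t)}+3e^{-G(t)}\int_0^t e^{G(u)}\bar x^2(u)f^3(u)\,du$ with $G(t)=3\int_0^t\bar x^2(u)f(u)\,du$.
   Context: It is known (and used as part of the setting) that $\bar x$ exists and is positive for all $t\ge0$ and that $\bar s_2$ explodes at a finite time $t_c>0$. The notation $a(t)\sim b(t)$ means $a(t)/b(t)\to1$. *)

theory Defs
  imports "HOL-Analysis.Analysis" "HOL-Library.Landau_Symbols"
begin

definition xbar_ode :: "(real \<Rightarrow> real) \<Rightarrow> bool" where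
  "xbar_ode x \<longleftrightarrow> x 0 = 1 \<and>
     (\<forall>t\<ge>0. (x has_real_derivative (- ((x t)^2) - (1 - (x t)^2) * x t)) (at t within (atLeast 0)))"

definition s_system_sol ::
  "(real \<Rightarrow> real) \<Rightarrow> real \<Rightarrow> (real \<Rightarrow> real) \<Rightarrow> (real \<Rightarrow> real) \<Rightarrow> (real \<Rightarrow> real) \<Rightarrow> bool" where
  "s_system_sol x tc s2 s3 s4 \<longleftrightarrow> s2 0 = 1 \<and> s3 0 = 1 \<and> s4 0 = 1 \<and>
     (\<forall>t\<in>{0..<tc}.
        (s2 has_real_derivative ((x t)^2 + (1 - (x t)^2) * (s2 t)^2)) (at t within {0..<tc}) \<and>
        (s3 has_real_derivative (3 * (x t)^2 + 3 * (1 - (x t)^2) * s2 t * s3 t)) (at t within {0..<tc}) \<and>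
        (s4 has_real_derivative (7 * (x t)^2 + (1 - (x t)^2) * (4 * s2 t * s4 t + 3 * (s3 t)^2)))
           (at t within {0..<tc}))"

definition s2_sol :: "(real \<Rightarrow> real) \<Rightarrow> real \<Rightarrow> (real \<Rightarrow> real) \<Rightarrow> bool" where
  "s2_sol x tc s2 \<longleftrightarrow> s2 0 = 1 \<and>
     (\<forall>t\<in>{0..<tc}.
        (s2 has_real_derivative ((x t)^2 + (1 - (x t)^2) * (s2 t)^2)) (at t within {0..<tc}))"

definition f_sol :: "(real \<Rightarrow> real) \<Rightarrow> real \<Rightarrow> (real \<Rightarrow> real) \<Rightarrow> bool" where
  "f_sol x tc f \<longleftrightarrow> f 0 = 1 \<and>
     (\<forall>t\<in>{0..tc}.
        (f has_real_derivative (- ((x t)^2 * (f t)^2) - (1 - (x t)^2))) (at t within {0..tc}))"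

definition g_sol :: "(real \<Rightarrow> real) \<Rightarrow> (real \<Rightarrow> real) \<Rightarrow> real \<Rightarrow> (real \<Rightarrow> real) \<Rightarrow> bool" where
  "g_sol x f tc g \<longleftrightarrow> g 0 = 1 \<and>
     (\<forall>t\<in>{0..tc}.
        (g has_real_derivative (3 * (x t)^2 * (f t)^3 - 3 * (x t)^2 * f t * g t)) (at t within {0..tc}))"

end

theory Submission
  imports Defs
begin

text \<open>
  The reciprocal f = 1/s2 solves a Riccati equation whose right-hand side stays bounded, so f
  is regular on [0, tc]; it vanishes at tc with slope -(1 - x(tc)^2) = -1/alpha, whence
  f(t) = (tc - t)/alpha (1 + O(tc - t)). The higher moments are explicit in f: the equation for g
  is exactly the one making g/f^3 solve the s3 equation, and s4 = (k + 3 g^2/f)/f^4 where k solves a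
  linear equation with continuous coefficients on [0, tc], so k is bounded. A Gronwall argument for
  the triangular system identifies every solution with these, and the asymptotics follow from
  f ~ (tc - t)/alpha, g t \<rightarrow> g tc > 0 and k f = O(tc - t).
\<close>

lemma real_mvt_within:
  fixes f f' :: "real \<Rightarrow> real"
  assumes "a < b" and "{a..b} \<subseteq> S"
    and deriv: "\<forall>t\<in>{a..b}. (f has_real_derivative f' t) (at t within S)"
  shows "\<exists>z. a < z \<and> z < b \<and> f b - f a = (b - a) * f' z"
proof -
  have "(f has_derivative (\<lambda>h. f' t * h)) (at t within {a..b})" if "a \<le> t" "t \<le> b" for t
    using DERIV_subset[OF bspec[OF deriv] assms(2)] that by (simp add: has_field_derivative_def)
  from mvt_simple[OF \<open>a < b\<close> this] show ?thesis by (auto simp: mult.commute)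
qed

lemma DERIV_within_nonneg_imp_le:
  fixes f f' :: "real \<Rightarrow> real"
  assumes "a \<le> b" and "{a..b} \<subseteq> S"
    and "\<forall>t\<in>{a..b}. (f has_real_derivative f' t) (at t within S)"
    and "\<forall>t\<in>{a..b}. 0 \<le> f' t"
  shows "f a \<le> f b"
proof (cases "a = b")
  case False
  with assms real_mvt_within[of a b S f f'] obtain z where "a < z" "z < b" "f b - f a = (b - a) * f' z"
    by auto
  with assms show ?thesis by (metis atLeastAtMost_iff diff_ge_0_iff_ge less_imp_le zero_le_mult_iff)
qed simp

lemma DERIV_within_bound:
  fixes f f' :: "real \<Rightarrow> real"
  assumes "a \<le> b" and "{a..b} \<subseteq> S"
    and "\<forall>t\<in>{a..b}. (f has_real_derivative f' t) (at t within S)"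
    and "\<forall>t\<in>{a..b}. \<bar>f' t\<bar> \<le> B"
  shows "\<bar>f b - f a\<bar> \<le> B * (b - a)"
proof -
  have "(f has_real_derivative f' t) (at t within {a..b})" if "t \<in> {a..b}" for t
    using assms(2,3) that by (blast intro: DERIV_subset)
  with field_differentiable_bound[of "{a..b}" f f' B b a] assms(1,4) show ?thesis by auto
qed

lemma continuous_DERIV_imp_lipschitz_Icc:
  fixes f f' :: "real \<Rightarrow> real"
  assumes "\<forall>t\<in>{a..b}. (f has_real_derivative f' t) (at t within {a..b})"
    and "continuous_on {a..b} f'"
  shows "\<exists>L\<ge>0. \<forall>s\<in>{a..b}. \<forall>t\<in>{a..b}. \<bar>f t - f s\<bar> \<le> L * \<bar>t - s\<bar>"
proof -
  obtain B where "\<forall>t\<in>{a..b}. \<bar>f' t\<bar> \<le> B"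
    using compact_imp_bounded[OF compact_continuous_image[OF assms(2) compact_Icc]]
    by (auto simp: bounded_iff)
  then have L: "\<forall>t\<in>{a..b}. \<bar>f' t\<bar> \<le> max B 0" by auto
  have "\<bar>f t - f s\<bar> \<le> max B 0 * \<bar>t - s\<bar>" if "s \<in> {a..b}" "t \<in> {a..b}" for s t
    using field_differentiable_bound[of "{a..b}" f f' "max B 0" t s] assms(1) L that by auto
  then show ?thesis by (intro exI[of _ "max B 0"]) auto
qed

lemma gronwall_vanishing:
  fixes d d' :: "real \<Rightarrow> real"
  assumes "{0..T} \<subseteq> S"
    and deriv: "\<forall>t\<in>{0..T}. (d has_real_derivative d' t) (at t within S)"
    and growth: "\<forall>t\<in>{0..T}. \<bar>d' t\<bar> \<le> M * \<bar>d t\<bar>"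
    and "d 0 = 0"
  shows "\<forall>t\<in>{0..T}. d t = 0"
proof
  fix t assume t: "t \<in> {0..T}"
  then have sub: "{0..t} \<subseteq> S" using assms(1) by auto
  \<comment> \<open>The weighted square (d s)^2 exp(-2 M s) is nonincreasing.\<close>
  define E where "E s = exp (- 2 * M * s)" for s
  define D where "D s = - ((d s)^2 * E s)" for s
  have D': "\<forall>s\<in>{0..t}. (D has_real_derivative (2 * (M * (d s)^2 - d s * d' s) * E s)) (at s within S)"
  proof
    fix s assume "s \<in> {0..t}"
    then have "(d has_real_derivative d' s) (at s within S)" using deriv t by auto
    moreover have "(E has_real_derivative - 2 * M * E s) (at s within S)"
      unfolding E_def by (auto intro!: derivative_eq_intros)
    ultimately have "(D has_real_derivative - (2 * d s * d' s * E s + (d s)^2 * (- 2 * M * E s)))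
        (at s within S)"
      unfolding D_def by (auto intro!: derivative_eq_intros)
    then show "(D has_real_derivative (2 * (M * (d s)^2 - d s * d' s) * E s)) (at s within S)"
      by (simp add: algebra_simps power2_eq_square)
  qed
  have D'_nonneg: "\<forall>s\<in>{0..t}. 0 \<le> 2 * (M * (d s)^2 - d s * d' s) * E s"
  proof
    fix s assume "s \<in> {0..t}"
    have "d s * d' s \<le> \<bar>d s\<bar> * \<bar>d' s\<bar>" by (simp add: abs_mult[symmetric])
    also have "\<dots> \<le> \<bar>d s\<bar> * (M * \<bar>d s\<bar>)"
      using growth \<open>s \<in> {0..t}\<close> t by (intro mult_left_mono) auto
    also have "\<dots> = M * (d s)^2" by (simp add: power2_eq_square abs_mult_self_eq)
    finally show "0 \<le> 2 * (M * (d s)^2 - d s * d' s) * E s" by (simp add: E_def)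
  qed
  have "D 0 \<le> D t"
    using DERIV_within_nonneg_imp_le[OF _ sub D' D'_nonneg] t by simp
  then have "(d t)^2 * E t \<le> 0" using \<open>d 0 = 0\<close> by (simp add: D_def)
  then show "d t = 0" by (simp add: E_def mult_le_0_iff)
qed

lemma linear_ode_unique_Ico:
  fixes y1 y2 D1 D2 c :: "real \<Rightarrow> real"
  assumes "\<forall>t\<in>{0..<T}. (y1 has_real_derivative D1 t) (at t within {0..<T})"
    and "\<forall>t\<in>{0..<T}. (y2 has_real_derivative D2 t) (at t within {0..<T})"
    and diff: "\<forall>t\<in>{0..<T}. D1 t - D2 t = c t * (y1 t - y2 t)"
    and "continuous_on {0..<T} c"
    and "y1 0 = y2 0"
  shows "\<forall>t\<in>{0..<T}. y1 t = y2 t"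
proof
  fix t assume t: "t \<in> {0..<T}"
  then have sub: "{0..t} \<subseteq> {0..<T}" by auto
  obtain M where M: "\<forall>s\<in>{0..t}. \<bar>c s\<bar> \<le> M"
    using compact_imp_bounded[OF compact_continuous_image[OF continuous_on_subset[OF assms(4) sub] compact_Icc]]
    by (auto simp: bounded_iff)
  have "((\<lambda>s. y1 s - y2 s) has_real_derivative D1 s - D2 s) (at s within {0..<T})"
    if "s \<in> {0..t}" for s
    using that sub assms(1,2) by (intro DERIV_diff) auto
  moreover have "\<bar>D1 s - D2 s\<bar> \<le> M * \<bar>y1 s - y2 s\<bar>" if "s \<in> {0..t}" for s
  proof -
    have "\<bar>D1 s - D2 s\<bar> = \<bar>c s\<bar> * \<bar>y1 s - y2 s\<bar>"
      using diff that sub by (auto simp: abs_mult)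
    also have "\<dots> \<le> M * \<bar>y1 s - y2 s\<bar>" using M that by (intro mult_right_mono) auto
    finally show ?thesis .
  qed
  ultimately have "\<forall>s\<in>{0..t}. y1 s - y2 s = 0"
    using \<open>y1 0 = y2 0\<close>
    by (intro gronwall_vanishing[OF sub, where d' = "\<lambda>s. D1 s - D2 s" and M = M]) auto
  then show "y1 t = y2 t" using t by auto
qed

lemma linear_ode_exists:
  fixes a b :: "real \<Rightarrow> real"
  assumes "continuous_on {0..T} a" and "continuous_on {0..T} b"
  shows "\<exists>y. y 0 = c \<and> (\<forall>t\<in>{0..T}. (y has_real_derivative a t * y t + b t) (at t within {0..T}))"
proof -
  define A where "A t = integral {0..t} a" for t
  define I where "I t = integral {0..t} (\<lambda>u. exp (- A u) * b u)" for t
  define y where "y t = exp (A t) * (c + I t)" for t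
  have dA: "\<forall>t\<in>{0..T}. (A has_real_derivative a t) (at t within {0..T})"
    unfolding A_def using integral_has_real_derivative[OF assms(1)] by blast
  then have "continuous_on {0..T} (\<lambda>u. exp (- A u) * b u)"
    by (intro continuous_intros assms(2) DERIV_continuous_on[of _ A a]) auto
  then have dI: "\<forall>t\<in>{0..T}. (I has_real_derivative exp (- A t) * b t) (at t within {0..T})"
    unfolding I_def using integral_has_real_derivative by blast
  have "(y has_real_derivative a t * y t + b t) (at t within {0..T})" if "t \<in> {0..T}" for t
  proof -
    have "(y has_real_derivative exp (A t) * a t * (c + I t) + exp (A t) * (exp (- A t) * b t))
        (at t within {0..T})"
      unfolding y_def using dA dI that by (auto intro!: derivative_eq_intros)
    moreover have "exp (A t) * a t * (c + I t) + exp (A t) * (exp (- A t) * b t) = a t * y t + b t"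
      unfolding y_def by (simp add: exp_minus field_simps)
    ultimately show ?thesis by simp
  qed
  moreover have "y 0 = c" by (simp add: y_def I_def A_def)
  ultimately show ?thesis by blast
qed

lemma linear_ode_pos:
  fixes y a b :: "real \<Rightarrow> real"
  assumes "0 \<le> T" and "continuous_on {0..T} a"
    and deriv: "\<forall>t\<in>{0..T}. (y has_real_derivative a t * y t + b t) (at t within {0..T})"
    and "\<forall>t\<in>{0..T}. 0 \<le> b t" and "0 < y 0"
  shows "0 < y T"
proof -
  define A where "A t = integral {0..t} a" for t
  have dA: "\<forall>t\<in>{0..T}. (A has_real_derivative a t) (at t within {0..T})"
    unfolding A_def using integral_has_real_derivative[OF assms(2)] by blast
  have D: "((\<lambda>t. exp (- A t) * y t) has_real_derivative exp (- A t) * b t) (at t within {0..T})"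
    if "t \<in> {0..T}" for t
  proof -
    have "((\<lambda>t. exp (- A t) * y t) has_real_derivative
        exp (- A t) * (- a t) * y t + exp (- A t) * (a t * y t + b t)) (at t within {0..T})"
      using dA deriv that by (auto intro!: derivative_eq_intros)
    then show ?thesis by (simp add: algebra_simps)
  qed
  have "exp (- A 0) * y 0 \<le> exp (- A T) * y T"
    using D assms(4)
    by (intro DERIV_within_nonneg_imp_le[OF assms(1) order_refl, where f' = "\<lambda>t. exp (- A t) * b t"]) auto
  moreover have "0 < exp (- A 0) * y 0" using \<open>0 < y 0\<close> by simp
  ultimately have "0 < exp (- A T) * y T" by linarith
  then show ?thesis by (simp add: zero_less_mult_iff)
qed

lemma s_system_sol_unique:
  assumes "continuous_on {0..<tc} x"
    and A: "s_system_sol x tc a2 a3 a4" and B: "s_system_sol x tc b2 b3 b4"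
  shows "\<forall>t\<in>{0..<tc}. a2 t = b2 t \<and> a3 t = b3 t \<and> a4 t = b4 t"
proof -
  have a2: "\<forall>t\<in>{0..<tc}. (a2 has_real_derivative (x t)^2 + (1 - (x t)^2) * (a2 t)^2) (at t within {0..<tc})"
    and a3: "\<forall>t\<in>{0..<tc}. (a3 has_real_derivative 3 * (x t)^2 + 3 * (1 - (x t)^2) * a2 t * a3 t) (at t within {0..<tc})"
    and a4: "\<forall>t\<in>{0..<tc}. (a4 has_real_derivative 7 * (x t)^2 + (1 - (x t)^2) * (4 * a2 t * a4 t + 3 * (a3 t)^2)) (at t within {0..<tc})"
    using A by (simp_all add: s_system_sol_def)
  have b2: "\<forall>t\<in>{0..<tc}. (b2 has_real_derivative (x t)^2 + (1 - (x t)^2) * (b2 t)^2) (at t within {0..<tc})"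
    and b3: "\<forall>t\<in>{0..<tc}. (b3 has_real_derivative 3 * (x t)^2 + 3 * (1 - (x t)^2) * b2 t * b3 t) (at t within {0..<tc})"
    and b4: "\<forall>t\<in>{0..<tc}. (b4 has_real_derivative 7 * (x t)^2 + (1 - (x t)^2) * (4 * b2 t * b4 t + 3 * (b3 t)^2)) (at t within {0..<tc})"
    using B by (simp_all add: s_system_sol_def)
  have init: "a2 0 = b2 0" "a3 0 = b3 0" "a4 0 = b4 0"
    using A B by (simp_all add: s_system_sol_def)
  have cont: "continuous_on {0..<tc} a2" "continuous_on {0..<tc} b2"
    by (rule DERIV_continuous_on, use a2 b2 in blast)+
  have diff2: "\<forall>t\<in>{0..<tc}. ((x t)^2 + (1 - (x t)^2) * (a2 t)^2) - ((x t)^2 + (1 - (x t)^2) * (b2 t)^2)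
      = (1 - (x t)^2) * (a2 t + b2 t) * (a2 t - b2 t)"
    by (simp add: power2_eq_square algebra_simps)
  have "continuous_on {0..<tc} (\<lambda>t. (1 - (x t)^2) * (a2 t + b2 t))"
    by (intro continuous_intros assms(1) cont)
  from linear_ode_unique_Ico[OF a2 b2 diff2 this init(1)]
  have eq2: "\<forall>t\<in>{0..<tc}. a2 t = b2 t" .
  then have diff3: "\<forall>t\<in>{0..<tc}. (3 * (x t)^2 + 3 * (1 - (x t)^2) * a2 t * a3 t)
      - (3 * (x t)^2 + 3 * (1 - (x t)^2) * b2 t * b3 t) = 3 * (1 - (x t)^2) * a2 t * (a3 t - b3 t)"
    by (simp add: algebra_simps)
  have "continuous_on {0..<tc} (\<lambda>t. 3 * (1 - (x t)^2) * a2 t)"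
    by (intro continuous_intros assms(1) cont)
  from linear_ode_unique_Ico[OF a3 b3 diff3 this init(2)]
  have eq3: "\<forall>t\<in>{0..<tc}. a3 t = b3 t" .
  with eq2 have diff4: "\<forall>t\<in>{0..<tc}. (7 * (x t)^2 + (1 - (x t)^2) * (4 * a2 t * a4 t + 3 * (a3 t)^2))
      - (7 * (x t)^2 + (1 - (x t)^2) * (4 * b2 t * b4 t + 3 * (b3 t)^2))
      = 4 * (1 - (x t)^2) * a2 t * (a4 t - b4 t)"
    by (simp add: algebra_simps)
  have "continuous_on {0..<tc} (\<lambda>t. 4 * (1 - (x t)^2) * a2 t)"
    by (intro continuous_intros assms(1) cont)
  from linear_ode_unique_Ico[OF a4 b4 diff4 this init(3)] eq2 eq3 show ?thesis by blast
qed

definition one_plus_O :: "'a filter \<Rightarrow> ('a \<Rightarrow> real) \<Rightarrow> ('a \<Rightarrow> real) \<Rightarrow> bool" where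
  "one_plus_O F h r \<longleftrightarrow> (\<lambda>t. r t - 1) \<in> O[F](h)"

context
  fixes F :: "'a filter" and h :: "'a \<Rightarrow> real"
  assumes h_tendsto_0: "(h \<longlongrightarrow> 0) F"
begin

lemma one_plus_O_tendsto:
  assumes "one_plus_O F h r"
  shows "(r \<longlongrightarrow> 1) F"
proof -
  have "h \<in> o[F](\<lambda>_. 1)" by (rule smalloI_tendsto) (use h_tendsto_0 in auto)
  with assms have "(\<lambda>t. r t - 1) \<in> o[F](\<lambda>_. 1)"
    unfolding one_plus_O_def by (rule landau_o.big_small_trans)
  then have "((\<lambda>t. (r t - 1) + 1) \<longlongrightarrow> 0 + 1) F"
    by (intro tendsto_add) (auto dest: smalloD_tendsto)
  then show ?thesis by simp
qed

lemma one_plus_O_bounded: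
  assumes "one_plus_O F h r"
  shows "r \<in> O[F](\<lambda>_. 1)"
  using one_plus_O_tendsto[OF assms] by (intro bigoI_tendsto[where c = 1]) auto

lemma one_plus_O_mult:
  assumes "one_plus_O F h r" and "one_plus_O F h s"
  shows "one_plus_O F h (\<lambda>t. r t * s t)"
proof -
  have "(\<lambda>t. (r t - 1) * s t) \<in> O[F](\<lambda>t. h t * 1)"
    using assms by (intro landau_o.big.mult one_plus_O_bounded) (auto simp: one_plus_O_def)
  then have "(\<lambda>t. (r t - 1) * s t + (s t - 1)) \<in> O[F](h)"
    using assms(2) by (intro sum_in_bigo(1)) (auto simp: one_plus_O_def)
  then show ?thesis unfolding one_plus_O_def by (simp add: algebra_simps)
qed

lemma one_plus_O_power:
  assumes "one_plus_O F h r"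
  shows "one_plus_O F h (\<lambda>t. r t ^ n)"
  by (induction n) (auto simp: one_plus_O_def intro: one_plus_O_mult[OF assms, unfolded one_plus_O_def])

lemma one_plus_O_inverse:
  assumes "one_plus_O F h r"
  shows "one_plus_O F h (\<lambda>t. inverse (r t))"
proof -
  have r: "(r \<longlongrightarrow> 1) F" by (rule one_plus_O_tendsto[OF assms])
  then have "(\<lambda>t. inverse (r t)) \<in> O[F](\<lambda>_. 1)"
    by (intro bigoI_tendsto[where c = 1]) (auto intro: tendsto_eq_intros)
  from landau_o.big.mult[OF assms[unfolded one_plus_O_def] this]
  have "(\<lambda>t. - ((r t - 1) * inverse (r t))) \<in> O[F](h)" by simp
  moreover have "eventually (\<lambda>t. r t \<noteq> 0) F"
    using tendsto_imp_eventually_ne[OF r] by simp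
  then have "eventually (\<lambda>t. - ((r t - 1) * inverse (r t)) = inverse (r t) - 1) F"
    by eventually_elim (simp add: field_simps)
  ultimately show ?thesis unfolding one_plus_O_def using landau_o.big.in_cong by fastforce
qed

lemma one_plus_O_imp_asymp_equiv:
  assumes "one_plus_O F h (\<lambda>t. u t / v t)"
  shows "u \<sim>[F] v"
  by (rule asymp_equivI'[OF one_plus_O_tendsto[OF assms]])

end

lemma one_plus_O_add:
  assumes "one_plus_O F h r" and "e \<in> O[F](h)"
  shows "one_plus_O F h (\<lambda>t. r t + e t)"
  using sum_in_bigo(1)[OF assms[unfolded one_plus_O_def]]
  unfolding one_plus_O_def by (simp add: algebra_simps)

lemma one_plus_O_cong:
  assumes "one_plus_O F h r" and "eventually (\<lambda>t. r t = s t) F"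
  shows "one_plus_O F h s"
proof -
  have "eventually (\<lambda>t. r t - 1 = s t - 1) F" using assms(2) by eventually_elim simp
  with assms(1) show ?thesis unfolding one_plus_O_def using landau_o.big.in_cong by fastforce
qed

locale moment_blowup =
  fixes x s2 f g :: "real \<Rightarrow> real" and tc :: real
  assumes x_ode: "xbar_ode x"
    and x_range: "\<forall>t\<ge>0. 0 < x t \<and> x t \<le> 1"
    and tc_pos: "0 < tc"
    and s2: "s2_sol x tc s2"
    and s2_explodes: "filterlim s2 at_top (at_left tc)"
    and f: "f_sol x tc f"
    and g: "g_sol x f tc g"
begin

definition alpha :: real where
  "alpha = 1 / (1 - (x tc)^2)"

lemma x_deriv:
  "\<forall>t\<in>{0..tc}. (x has_real_derivative - ((x t)^2) - (1 - (x t)^2) * x t) (at t within {0..tc})"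
proof
  fix t assume t: "t \<in> {0..tc}"
  with x_ode have "(x has_real_derivative - ((x t)^2) - (1 - (x t)^2) * x t) (at t within atLeast 0)"
    by (simp add: xbar_ode_def)
  then show "(x has_real_derivative - ((x t)^2) - (1 - (x t)^2) * x t) (at t within {0..tc})"
    by (rule DERIV_subset) auto
qed

lemma x_continuous: "continuous_on {0..tc} x"
  by (rule DERIV_continuous_on) (use x_deriv in blast)

lemma x_pos: "0 \<le> t \<Longrightarrow> 0 < x t"
  and x_le_1: "0 \<le> t \<Longrightarrow> x t \<le> 1"
  using x_range by auto

lemma x_tc_less_1: "x tc < 1"
proof -
  obtain z where z: "0 < z" "z < tc" "x tc - x 0 = (tc - 0) * (- ((x z)^2) - (1 - (x z)^2) * x z)"
    using real_mvt_within[OF tc_pos order_refl x_deriv] by blast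
  have "0 < x z" "x z \<le> 1" using z x_pos x_le_1 by auto
  then have "(x z)^2 \<le> 1" "0 < (x z)^2" by (simp_all add: power_le_one)
  with \<open>0 < x z\<close> have "- ((x z)^2) - (1 - (x z)^2) * x z < 0"
    by (smt (verit) mult_nonneg_nonneg)
  with z tc_pos have "x tc - x 0 < 0" by (simp add: mult_pos_neg)
  then show ?thesis using x_ode by (simp add: xbar_ode_def)
qed

lemma alpha_pos: "0 < alpha"
proof -
  have "0 < x tc" using x_pos tc_pos by simp
  then have "(x tc)^2 < 1" using x_tc_less_1 by (simp add: power_less_one_iff)
  then show ?thesis by (simp add: alpha_def)
qed

lemma x_sq_lipschitz_at_tc: "\<exists>L\<ge>0. \<forall>t\<in>{0..tc}. \<bar>(x t)^2 - (x tc)^2\<bar> \<le> L * (tc - t)"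
proof -
  have deriv: "\<forall>t\<in>{0..tc}. ((\<lambda>t. (x t)^2) has_real_derivative
      2 * x t * (- ((x t)^2) - (1 - (x t)^2) * x t)) (at t within {0..tc})"
    using x_deriv by (auto intro!: derivative_eq_intros)
  have "continuous_on {0..tc} (\<lambda>t. 2 * x t * (- ((x t)^2) - (1 - (x t)^2) * x t))"
    by (intro continuous_intros x_continuous)
  from continuous_DERIV_imp_lipschitz_Icc[OF deriv this] obtain L
    where "L \<ge> 0" and L: "\<forall>s\<in>{0..tc}. \<forall>t\<in>{0..tc}. \<bar>(x t)^2 - (x s)^2\<bar> \<le> L * \<bar>t - s\<bar>"
    by blast
  have "\<bar>(x t)^2 - (x tc)^2\<bar> \<le> L * (tc - t)" if "t \<in> {0..tc}" for t
    using L[rule_format, of tc t] that by (simp add: abs_minus_commute)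
  with \<open>L \<ge> 0\<close> show ?thesis by blast
qed

lemma s2_deriv:
  "\<forall>t\<in>{0..<tc}. (s2 has_real_derivative (x t)^2 + (1 - (x t)^2) * (s2 t)^2) (at t within {0..<tc})"
  using s2 by (simp add: s2_sol_def)

lemma s2_ge_1:
  assumes "t \<in> {0..<tc}"
  shows "1 \<le> s2 t"
proof -
  have sub: "{0..t} \<subseteq> {0..<tc}" using assms by auto
  have nonneg: "\<forall>u\<in>{0..t}. 0 \<le> (x u)^2 + (1 - (x u)^2) * (s2 u)^2"
  proof
    fix u assume "u \<in> {0..t}"
    then have "(x u)^2 \<le> 1" using x_pos[of u] x_le_1[of u] by (simp add: power_le_one)
    then show "0 \<le> (x u)^2 + (1 - (x u)^2) * (s2 u)^2" by simp
  qed
  have "\<forall>u\<in>{0..t}. (s2 has_real_derivative (x u)^2 + (1 - (x u)^2) * (s2 u)^2) (at u within {0..<tc})"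
    using s2_deriv sub by blast
  from DERIV_within_nonneg_imp_le[OF _ sub this nonneg] assms have "s2 0 \<le> s2 t" by simp
  then show ?thesis using s2 by (simp add: s2_sol_def)
qed

lemma f_deriv:
  "\<forall>t\<in>{0..tc}. (f has_real_derivative - ((x t)^2 * (f t)^2) - (1 - (x t)^2)) (at t within {0..tc})"
  using f by (simp add: f_sol_def)

lemma f_continuous: "continuous_on {0..tc} f"
  by (rule DERIV_continuous_on) (use f_deriv in blast)

lemma f_eq_inverse_s2:
  assumes "t \<in> {0..<tc}"
  shows "f t = 1 / s2 t"
proof -
  have sub: "{0..<tc} \<subseteq> {0..tc}" by auto
  have s2_nz: "\<forall>u\<in>{0..<tc}. s2 u \<noteq> 0" using s2_ge_1 by fastforce
  have "\<forall>u\<in>{0..<tc}. (f has_real_derivative - ((x u)^2 * (f u)^2) - (1 - (x u)^2)) (at u within {0..<tc})"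
    using f_deriv sub by (blast intro: DERIV_subset)
  moreover have "\<forall>u\<in>{0..<tc}. ((\<lambda>u. 1 / s2 u) has_real_derivative
      - ((x u)^2 + (1 - (x u)^2) * (s2 u)^2) / (s2 u)^2) (at u within {0..<tc})"
    using s2_deriv s2_nz by (auto intro!: derivative_eq_intros simp: power2_eq_square)
  moreover have "\<forall>u\<in>{0..<tc}. (- ((x u)^2 * (f u)^2) - (1 - (x u)^2))
        - (- ((x u)^2 + (1 - (x u)^2) * (s2 u)^2) / (s2 u)^2)
      = - ((x u)^2 * (f u + 1 / s2 u)) * (f u - 1 / s2 u)"
    using s2_nz by (auto simp: field_simps power2_eq_square)
  moreover have "continuous_on {0..<tc} (\<lambda>u. - ((x u)^2 * (f u + 1 / s2 u)))"
  proof -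
    have "continuous_on {0..<tc} s2" by (rule DERIV_continuous_on) (use s2_deriv in blast)
    then show ?thesis
      using s2_nz continuous_on_subset[OF x_continuous sub] continuous_on_subset[OF f_continuous sub]
      by (intro continuous_intros) auto
  qed
  ultimately have "\<forall>u\<in>{0..<tc}. f u = 1 / s2 u"
    by (rule linear_ode_unique_Ico) (use f s2 in \<open>simp add: f_sol_def s2_sol_def\<close>)
  with assms show ?thesis by blast
qed

lemma f_pos: "t \<in> {0..<tc} \<Longrightarrow> 0 < f t"
  using f_eq_inverse_s2 s2_ge_1 by fastforce

lemma f_tc: "f tc = 0"
proof -
  have "(f \<longlongrightarrow> f tc) (at_left tc)"
    using f_continuous tc_pos by (auto simp: continuous_on_def at_within_Icc_at_left[symmetric])
  moreover have "((\<lambda>t. 1 / s2 t) \<longlongrightarrow> 0) (at_left tc)"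
    using tendsto_inverse_0_at_top[OF s2_explodes] by (simp add: inverse_eq_divide)
  moreover have "eventually (\<lambda>t. 1 / s2 t = f t) (at_left tc)"
    using eventually_at_left_real[OF tc_pos] by eventually_elim (simp add: f_eq_inverse_s2)
  ultimately show ?thesis
    using tendsto_cong tendsto_unique trivial_limit_at_left_real by metis
qed

lemma f_nonneg: "t \<in> {0..tc} \<Longrightarrow> 0 \<le> f t"
  using f_pos[of t] f_tc by (cases "t = tc") auto

lemma f_linear_bound: "\<exists>C\<ge>0. \<forall>t\<in>{0..tc}. \<bar>f t\<bar> \<le> C * (tc - t)"
proof -
  have "continuous_on {0..tc} (\<lambda>t. - ((x t)^2 * (f t)^2) - (1 - (x t)^2))"
    by (intro continuous_intros x_continuous f_continuous)
  from continuous_DERIV_imp_lipschitz_Icc[OF f_deriv this] obtain C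
    where "C \<ge> 0" and C: "\<forall>s\<in>{0..tc}. \<forall>t\<in>{0..tc}. \<bar>f t - f s\<bar> \<le> C * \<bar>t - s\<bar>"
    by blast
  have "\<bar>f t\<bar> \<le> C * (tc - t)" if "t \<in> {0..tc}" for t
    using C[rule_format, of t tc] that tc_pos by (simp add: f_tc)
  with \<open>C \<ge> 0\<close> show ?thesis by blast
qed

lemma f_quadratic_bound: "\<exists>K. \<forall>t\<in>{0..tc}. \<bar>f t - (1 - (x tc)^2) * (tc - t)\<bar> \<le> K * (tc - t)^2"
proof -
  obtain C where "C \<ge> 0" and C: "\<forall>t\<in>{0..tc}. \<bar>f t\<bar> \<le> C * (tc - t)"
    using f_linear_bound by blast
  obtain L where "L \<ge> 0" and L: "\<forall>t\<in>{0..tc}. \<bar>(x t)^2 - (x tc)^2\<bar> \<le> L * (tc - t)"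
    using x_sq_lipschitz_at_tc by blast
  define K where "K = C^2 * tc + L"
  have "\<bar>f t - (1 - (x tc)^2) * (tc - t)\<bar> \<le> K * (tc - t)^2" if t: "t \<in> {0..tc}" for t
  proof -
    have sub: "{t..tc} \<subseteq> {0..tc}" using t by auto
    have deriv: "\<forall>u\<in>{t..tc}. ((\<lambda>u. f u - (1 - (x tc)^2) * (tc - u)) has_real_derivative
        - ((x u)^2 * (f u)^2) + ((x u)^2 - (x tc)^2)) (at u within {0..tc})"
    proof
      fix u assume "u \<in> {t..tc}"
      with f_deriv sub have "(f has_real_derivative - ((x u)^2 * (f u)^2) - (1 - (x u)^2)) (at u within {0..tc})"
        by blast
      then show "((\<lambda>u. f u - (1 - (x tc)^2) * (tc - u)) has_real_derivative
        - ((x u)^2 * (f u)^2) + ((x u)^2 - (x tc)^2)) (at u within {0..tc})"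
        by (auto intro!: derivative_eq_intros)
    qed
    have bound: "\<forall>u\<in>{t..tc}. \<bar>- ((x u)^2 * (f u)^2) + ((x u)^2 - (x tc)^2)\<bar> \<le> K * (tc - t)"
    proof
      fix u assume u: "u \<in> {t..tc}"
      then have u0: "u \<in> {0..tc}" using sub by blast
      have "(x u)^2 \<le> 1" using x_pos[of u] x_le_1[of u] u0 by (simp add: power_le_one)
      then have "\<bar>(x u)^2 * (f u)^2\<bar> \<le> \<bar>f u\<bar> * \<bar>f u\<bar>"
        by (simp add: mult_left_le_one_le power2_eq_square)
      also have "\<dots> \<le> (C * tc) * (C * (tc - t))"
      proof (rule mult_mono)
        have "C * (tc - u) \<le> C * tc" "C * (tc - u) \<le> C * (tc - t)"
          using u0 u \<open>C \<ge> 0\<close> by (simp_all add: mult_left_mono)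
        then show "\<bar>f u\<bar> \<le> C * tc" "\<bar>f u\<bar> \<le> C * (tc - t)"
          using C u0 by fastforce+
      qed (use \<open>C \<ge> 0\<close> tc_pos in auto)
      also have "\<dots> = C^2 * tc * (tc - t)" by (simp add: power2_eq_square)
      finally have "\<bar>(x u)^2 * (f u)^2\<bar> \<le> C^2 * tc * (tc - t)" .
      moreover have "L * (tc - u) \<le> L * (tc - t)" using u \<open>L \<ge> 0\<close> by (simp add: mult_left_mono)
      with L u0 have "\<bar>(x u)^2 - (x tc)^2\<bar> \<le> L * (tc - t)" by fastforce
      moreover have "\<bar>- ((x u)^2 * (f u)^2) + ((x u)^2 - (x tc)^2)\<bar>
          \<le> \<bar>(x u)^2 * (f u)^2\<bar> + \<bar>(x u)^2 - (x tc)^2\<bar>"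
        using abs_triangle_ineq[of "- ((x u)^2 * (f u)^2)"] by simp
      moreover have "K * (tc - t) = C^2 * tc * (tc - t) + L * (tc - t)"
        by (simp add: K_def algebra_simps)
      ultimately show "\<bar>- ((x u)^2 * (f u)^2) + ((x u)^2 - (x tc)^2)\<bar> \<le> K * (tc - t)"
        by linarith
    qed
    from DERIV_within_bound[OF _ sub deriv bound] t
    have "\<bar>(f tc - 0) - (f t - (1 - (x tc)^2) * (tc - t))\<bar> \<le> K * (tc - t) * (tc - t)"
      by simp
    then show ?thesis by (simp add: f_tc power2_eq_square)
  qed
  then show ?thesis by blast
qed

lemma g_deriv:
  "\<forall>t\<in>{0..tc}. (g has_real_derivative 3 * (x t)^2 * (f t)^3 - 3 * (x t)^2 * f t * g t) (at t within {0..tc})"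
  using g by (simp add: g_sol_def)

lemma g_continuous: "continuous_on {0..tc} g"
  by (rule DERIV_continuous_on) (use g_deriv in blast)

lemma g_tc_pos: "0 < g tc"
proof -
  have a: "continuous_on {0..tc} (\<lambda>t. - 3 * (x t)^2 * f t)"
    by (intro continuous_intros x_continuous f_continuous)
  have deriv: "\<forall>t\<in>{0..tc}. (g has_real_derivative - 3 * (x t)^2 * f t * g t + 3 * (x t)^2 * (f t)^3)
      (at t within {0..tc})"
    using g_deriv by (simp add: algebra_simps)
  have b: "\<forall>t\<in>{0..tc}. 0 \<le> 3 * (x t)^2 * (f t)^3"
    using f_nonneg by simp
  have "0 < g 0" using g by (simp add: g_sol_def)
  from linear_ode_pos[OF _ a deriv b this] tc_pos show ?thesis by simp
qed

lemma g_lipschitz_at_tc: "\<exists>L. \<forall>t\<in>{0..tc}. \<bar>g t - g tc\<bar> \<le> L * (tc - t)"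
proof -
  have "continuous_on {0..tc} (\<lambda>t. 3 * (x t)^2 * (f t)^3 - 3 * (x t)^2 * f t * g t)"
    by (intro continuous_intros x_continuous f_continuous g_continuous)
  from continuous_DERIV_imp_lipschitz_Icc[OF g_deriv this] obtain L
    where L: "\<forall>s\<in>{0..tc}. \<forall>t\<in>{0..tc}. \<bar>g t - g s\<bar> \<le> L * \<bar>t - s\<bar>"
    by blast
  have "\<bar>g t - g tc\<bar> \<le> L * (tc - t)" if "t \<in> {0..tc}" for t
    using L[rule_format, of tc t] that by (simp add: abs_minus_commute)
  then show ?thesis by blast
qed

lemma f_g_deriv_Ico:
  assumes "t \<in> {0..<tc}"
  shows "(f has_real_derivative - ((x t)^2 * (f t)^2) - (1 - (x t)^2)) (at t within {0..<tc})"
    and "(g has_real_derivative 3 * (x t)^2 * (f t)^3 - 3 * (x t)^2 * f t * g t) (at t within {0..<tc})"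
proof -
  have "t \<in> {0..tc}" and "{0..<tc} \<subseteq> {0..tc}" using assms by auto
  then show "(f has_real_derivative - ((x t)^2 * (f t)^2) - (1 - (x t)^2)) (at t within {0..<tc})"
    and "(g has_real_derivative 3 * (x t)^2 * (f t)^3 - 3 * (x t)^2 * f t * g t) (at t within {0..<tc})"
    using f_deriv g_deriv by (blast intro: DERIV_subset)+
qed

lemma s3_candidate_deriv:
  assumes t: "t \<in> {0..<tc}"
  shows "((\<lambda>t. g t / f t ^ 3) has_real_derivative
      3 * (x t)^2 + 3 * (1 - (x t)^2) * s2 t * (g t / f t ^ 3)) (at t within {0..<tc})"
proof -
  have f_nz: "f t \<noteq> 0" using f_pos[OF t] by simp
  have s2_eq: "s2 t = 1 / f t" using f_eq_inverse_s2[OF t] by simp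
  show ?thesis
    by (rule DERIV_cong[OF DERIV_divide[OF f_g_deriv_Ico(2)[OF t] DERIV_power[OF f_g_deriv_Ico(1)[OF t], where n = 3]]])
      (unfold s2_eq, insert f_nz, simp_all add: field_simps, algebra)
qed

lemma s4_candidate_deriv:
  assumes t: "t \<in> {0..<tc}"
    and k: "(k has_real_derivative - 4 * (x t)^2 * f t * k t
      + (7 * (x t)^2 * (f t)^4 - 18 * (x t)^2 * g t * (f t)^2 + 3 * (x t)^2 * (g t)^2)) (at t within {0..<tc})"
  shows "((\<lambda>t. (k t + 3 * (g t)^2 / f t) / f t ^ 4) has_real_derivative
      7 * (x t)^2 + (1 - (x t)^2) * (4 * s2 t * ((k t + 3 * (g t)^2 / f t) / f t ^ 4) + 3 * (g t / f t ^ 3)^2))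
      (at t within {0..<tc})"
proof -
  note df = f_g_deriv_Ico(1)[OF t] and dg = f_g_deriv_Ico(2)[OF t]
  have f_nz: "f t \<noteq> 0" using f_pos[OF t] by simp
  have s2_eq: "s2 t = 1 / f t" using f_eq_inverse_s2[OF t] by simp
  show ?thesis
    by (rule DERIV_cong[OF DERIV_divide[OF DERIV_add[OF k DERIV_divide[OF DERIV_cmult[OF DERIV_power[OF dg]] df]]
          DERIV_power[OF df, where n = 4]]])
      (unfold s2_eq, insert f_nz, simp_all add: field_simps, algebra)
qed

lemma moment_system_solvable:
  "\<exists>k. continuous_on {0..tc} k \<and>
     s_system_sol x tc s2 (\<lambda>t. g t / f t ^ 3) (\<lambda>t. (k t + 3 * (g t)^2 / f t) / f t ^ 4)"
proof -
  \<comment> \<open>Substituting s4 = (k + 3 g^2/f)/f^4 into the s4 equation leaves k' = -4 x^2 f k + q;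
    the initial value -2 gives s4 0 = 1.\<close>
  define q where "q t = 7 * (x t)^2 * (f t)^4 - 18 * (x t)^2 * g t * (f t)^2 + 3 * (x t)^2 * (g t)^2" for t
  have "continuous_on {0..tc} (\<lambda>t. - 4 * (x t)^2 * f t)" "continuous_on {0..tc} q"
    unfolding q_def by (intro continuous_intros x_continuous f_continuous g_continuous)+
  from linear_ode_exists[OF this, where c = "-2"] obtain k where "k 0 = -2"
    and k: "\<forall>t\<in>{0..tc}. (k has_real_derivative - 4 * (x t)^2 * f t * k t + q t) (at t within {0..tc})"
    by blast
  have "continuous_on {0..tc} k" by (rule DERIV_continuous_on) (use k in blast)
  moreover have "s_system_sol x tc s2 (\<lambda>t. g t / f t ^ 3) (\<lambda>t. (k t + 3 * (g t)^2 / f t) / f t ^ 4)"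
    unfolding s_system_sol_def
  proof (intro conjI ballI)
    have "f 0 = 1" "g 0 = 1" using f g by (simp_all add: f_sol_def g_sol_def)
    then show "s2 0 = 1" "g 0 / f 0 ^ 3 = 1" "(k 0 + 3 * (g 0)^2 / f 0) / f 0 ^ 4 = 1"
      using s2 \<open>k 0 = -2\<close> by (simp_all add: s2_sol_def)
  next
    fix t assume t: "t \<in> {0..<tc}"
    show "(s2 has_real_derivative (x t)^2 + (1 - (x t)^2) * (s2 t)^2) (at t within {0..<tc})"
      using s2_deriv t by blast
    show "((\<lambda>t. g t / f t ^ 3) has_real_derivative 3 * (x t)^2 + 3 * (1 - (x t)^2) * s2 t * (g t / f t ^ 3))
        (at t within {0..<tc})"
      by (rule s3_candidate_deriv[OF t])
    have "t \<in> {0..tc}" "{0..<tc} \<subseteq> {0..tc}" using t by auto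
    from DERIV_subset[OF bspec[OF k this(1)] this(2)]
    show "((\<lambda>t. (k t + 3 * (g t)^2 / f t) / f t ^ 4) has_real_derivative
        7 * (x t)^2 + (1 - (x t)^2) * (4 * s2 t * ((k t + 3 * (g t)^2 / f t) / f t ^ 4) + 3 * (g t / f t ^ 3)^2))
        (at t within {0..<tc})"
      unfolding q_def by (rule s4_candidate_deriv[OF t])
  qed
  ultimately show ?thesis by blast
qed

lemma tc_minus_tendsto_0: "((\<lambda>t. tc - t) \<longlongrightarrow> 0) (at_left tc)"
  by (auto intro!: tendsto_eq_intros)

lemma f_one_plus_O: "one_plus_O (at_left tc) (\<lambda>t. tc - t) (\<lambda>t. alpha * f t / (tc - t))"
proof -
  obtain K where K: "\<forall>t\<in>{0..tc}. \<bar>f t - (1 - (x tc)^2) * (tc - t)\<bar> \<le> K * (tc - t)^2"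
    using f_quadratic_bound by blast
  have "eventually (\<lambda>t. \<bar>alpha * f t / (tc - t) - 1\<bar> \<le> alpha * K * \<bar>tc - t\<bar>) (at_left tc)"
    using eventually_at_left_real[OF tc_pos]
  proof eventually_elim
    case (elim t)
    then have "0 < tc - t" and "t \<in> {0..tc}" by auto
    have "alpha * (f t - (1 - (x tc)^2) * (tc - t)) / (tc - t)
        = alpha * f t / (tc - t) - alpha * (1 - (x tc)^2)"
      using \<open>0 < tc - t\<close> by (simp add: field_simps)
    moreover have "alpha * (1 - (x tc)^2) = 1" using alpha_pos by (simp add: alpha_def)
    ultimately have "alpha * f t / (tc - t) - 1 = alpha * (f t - (1 - (x tc)^2) * (tc - t)) / (tc - t)"
      by simp
    also have "\<bar>\<dots>\<bar> \<le> alpha * (K * (tc - t)^2) / (tc - t)"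
      using K \<open>t \<in> {0..tc}\<close> \<open>0 < tc - t\<close> alpha_pos
      by (auto simp: abs_mult intro!: divide_right_mono mult_left_mono)
    also have "\<dots> = alpha * K * \<bar>tc - t\<bar>"
      using \<open>0 < tc - t\<close> by (simp add: power2_eq_square)
    finally show ?case .
  qed
  then show ?thesis unfolding one_plus_O_def by (intro bigoI) simp
qed

lemma g_one_plus_O: "one_plus_O (at_left tc) (\<lambda>t. tc - t) (\<lambda>t. g t / g tc)"
proof -
  obtain L where L: "\<forall>t\<in>{0..tc}. \<bar>g t - g tc\<bar> \<le> L * (tc - t)"
    using g_lipschitz_at_tc by blast
  have "eventually (\<lambda>t. \<bar>g t / g tc - 1\<bar> \<le> L / g tc * \<bar>tc - t\<bar>) (at_left tc)"
    using eventually_at_left_real[OF tc_pos]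
  proof eventually_elim
    case (elim t)
    then have "g t / g tc - 1 = (g t - g tc) / g tc" and "\<bar>g t - g tc\<bar> \<le> L * \<bar>tc - t\<bar>"
      using L g_tc_pos by (auto simp: field_simps)
    with g_tc_pos show ?case by (simp add: abs_divide divide_right_mono)
  qed
  then show ?thesis unfolding one_plus_O_def by (intro bigoI[where c = "L / g tc"]) simp
qed

lemma f_mult_continuous_bigo:
  assumes "continuous_on {0..tc} k"
  shows "(\<lambda>t. k t * f t) \<in> O[at_left tc](\<lambda>t. tc - t)"
proof -
  obtain C where C: "\<forall>t\<in>{0..tc}. \<bar>f t\<bar> \<le> C * (tc - t)" using f_linear_bound by blast
  obtain B where B: "\<forall>t\<in>{0..tc}. \<bar>k t\<bar> \<le> B"
    using compact_imp_bounded[OF compact_continuous_image[OF assms compact_Icc]]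
    by (auto simp: bounded_iff)
  then have "0 \<le> B" using tc_pos by force
  have "eventually (\<lambda>t. \<bar>k t * f t\<bar> \<le> B * C * \<bar>tc - t\<bar>) (at_left tc)"
    using eventually_at_left_real[OF tc_pos]
  proof eventually_elim
    case (elim t)
    then have "\<bar>k t\<bar> * \<bar>f t\<bar> \<le> B * (C * (tc - t))"
      using B C \<open>0 \<le> B\<close> by (intro mult_mono) auto
    with elim show ?case by (simp add: abs_mult)
  qed
  then show ?thesis by (intro bigoI) simp
qed

lemma inverse_f_one_plus_O:
  "one_plus_O (at_left tc) (\<lambda>t. tc - t) (\<lambda>t. inverse (alpha * f t / (tc - t)))"
  by (rule one_plus_O_inverse[OF tc_minus_tendsto_0 f_one_plus_O])

lemma s2_one_plus_O:
  "one_plus_O (at_left tc) (\<lambda>t. tc - t) (\<lambda>t. s2 t / (alpha * (tc - t) powi (-1)))"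
proof (rule one_plus_O_cong[OF inverse_f_one_plus_O])
  show "eventually (\<lambda>t. inverse (alpha * f t / (tc - t)) = s2 t / (alpha * (tc - t) powi (-1))) (at_left tc)"
    using eventually_at_left_real[OF tc_pos]
  proof eventually_elim
    case (elim t)
    then have s2_eq: "s2 t = 1 / f t" and "0 < f t" using f_eq_inverse_s2[of t] f_pos[of t] by auto
    with elim alpha_pos show ?case unfolding s2_eq by (simp add: power_int_minus field_simps)
  qed
qed

lemma s3_one_plus_O:
  assumes "\<forall>t\<in>{0..<tc}. s3 t = g t / f t ^ 3"
  shows "one_plus_O (at_left tc) (\<lambda>t. tc - t) (\<lambda>t. s3 t / (g tc * alpha^3 * (tc - t) powi (-3)))"
proof (rule one_plus_O_cong[OF one_plus_O_mult[OF tc_minus_tendsto_0 g_one_plus_O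
      one_plus_O_power[OF tc_minus_tendsto_0 inverse_f_one_plus_O, of 3]]])
  show "eventually (\<lambda>t. g t / g tc * inverse (alpha * f t / (tc - t)) ^ 3
      = s3 t / (g tc * alpha^3 * (tc - t) powi (-3))) (at_left tc)"
    using eventually_at_left_real[OF tc_pos]
  proof eventually_elim
    case (elim t)
    then have "s3 t = g t / f t ^ 3" "0 < f t" using assms f_pos by auto
    with elim alpha_pos g_tc_pos show ?case by (simp add: power_int_minus field_simps)
  qed
qed

lemma s4_one_plus_O:
  assumes "continuous_on {0..tc} k" and "\<forall>t\<in>{0..<tc}. s4 t = (k t + 3 * (g t)^2 / f t) / f t ^ 4"
  shows "one_plus_O (at_left tc) (\<lambda>t. tc - t) (\<lambda>t. s4 t / (3 * (g tc)^2 * alpha^5 * (tc - t) powi (-5)))"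
proof -
  have "continuous_on {0..tc} (\<lambda>t. k t / (3 * (g tc)^2))"
    using g_tc_pos by (intro continuous_intros assms(1)) auto
  from f_mult_continuous_bigo[OF this]
  have "one_plus_O (at_left tc) (\<lambda>t. tc - t) (\<lambda>t. (g t / g tc)^2 + k t / (3 * (g tc)^2) * f t)"
    by (intro one_plus_O_add one_plus_O_power[OF tc_minus_tendsto_0 g_one_plus_O])
  from one_plus_O_mult[OF tc_minus_tendsto_0 this
      one_plus_O_power[OF tc_minus_tendsto_0 inverse_f_one_plus_O, of 5]]
  show ?thesis
  proof (rule one_plus_O_cong)
    show "eventually (\<lambda>t. ((g t / g tc)^2 + k t / (3 * (g tc)^2) * f t) * inverse (alpha * f t / (tc - t)) ^ 5
        = s4 t / (3 * (g tc)^2 * alpha^5 * (tc - t) powi (-5))) (at_left tc)"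
      using eventually_at_left_real[OF tc_pos]
    proof eventually_elim
      case (elim t)
      then have s4_eq: "s4 t = (k t + 3 * (g t)^2 / f t) / f t ^ 4" and "0 < f t"
        using assms(2) f_pos by auto
      moreover have "f t ^ 5 = f t * f t ^ 4" by (simp add: power_Suc[symmetric])
      ultimately show ?case
        using elim alpha_pos g_tc_pos unfolding s4_eq by (simp add: power_int_minus field_simps)
    qed
  qed
qed

lemma moment_system_unique:
  assumes "s_system_sol x tc a2 a3 a4" and "s_system_sol x tc b2 b3 b4"
  shows "\<forall>t\<in>{0..<tc}. a2 t = b2 t \<and> a3 t = b3 t \<and> a4 t = b4 t"
proof (rule s_system_sol_unique[OF _ assms])
  show "continuous_on {0..<tc} x" by (rule continuous_on_subset[OF x_continuous]) auto
qed

lemma moment_asymptotics: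
  assumes sys: "s_system_sol x tc s2 s3 s4"
  shows "s2 \<sim>[at_left tc] (\<lambda>t. alpha / (tc - t))
       \<and> s3 \<sim>[at_left tc] (\<lambda>t. g tc * (s2 t)^3)
       \<and> s3 \<sim>[at_left tc] (\<lambda>t. g tc * alpha^3 / (tc - t)^3)
       \<and> s4 \<sim>[at_left tc] (\<lambda>t. 3 * (g tc)^2 * (s2 t)^5)
       \<and> s4 \<sim>[at_left tc] (\<lambda>t. 3 * (g tc)^2 * alpha^5 / (tc - t)^5)
       \<and> (\<lambda>t. s2 t / (alpha * (tc - t) powi (-1)) - 1) \<in> O[at_left tc](\<lambda>t. tc - t)
       \<and> (\<lambda>t. s3 t / (g tc * alpha^3 * (tc - t) powi (-3)) - 1) \<in> O[at_left tc](\<lambda>t. tc - t)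
       \<and> (\<lambda>t. s4 t / (3 * (g tc)^2 * alpha^5 * (tc - t) powi (-5)) - 1) \<in> O[at_left tc](\<lambda>t. tc - t)"
proof -
  obtain k where "continuous_on {0..tc} k"
    and "s_system_sol x tc s2 (\<lambda>t. g t / f t ^ 3) (\<lambda>t. (k t + 3 * (g t)^2 / f t) / f t ^ 4)"
    using moment_system_solvable by blast
  with moment_system_unique[OF sys] have
    R2: "one_plus_O (at_left tc) (\<lambda>t. tc - t) (\<lambda>t. s2 t / (alpha * (tc - t) powi (-1)))" and
    R3: "one_plus_O (at_left tc) (\<lambda>t. tc - t) (\<lambda>t. s3 t / (g tc * alpha^3 * (tc - t) powi (-3)))" and
    R4: "one_plus_O (at_left tc) (\<lambda>t. tc - t) (\<lambda>t. s4 t / (3 * (g tc)^2 * alpha^5 * (tc - t) powi (-5)))"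
    using s2_one_plus_O s3_one_plus_O s4_one_plus_O by auto
  have powi: "\<And>a y :: real. a * y powi (-1) = a / y" "\<And>a y :: real. a * y powi (-3) = a / y^3"
    "\<And>a y :: real. a * y powi (-5) = a / y^5"
    by (simp_all add: power_int_minus divide_inverse)
  note equiv = one_plus_O_imp_asymp_equiv[OF tc_minus_tendsto_0]
  have E2: "s2 \<sim>[at_left tc] (\<lambda>t. alpha / (tc - t))" using equiv[OF R2] by (simp only: powi)
  have E3: "s3 \<sim>[at_left tc] (\<lambda>t. g tc * alpha^3 / (tc - t)^3)" using equiv[OF R3] by (simp only: powi)
  have E4: "s4 \<sim>[at_left tc] (\<lambda>t. 3 * (g tc)^2 * alpha^5 / (tc - t)^5)" using equiv[OF R4] by (simp only: powi)
  have "(\<lambda>t. g tc * (s2 t)^3) \<sim>[at_left tc] (\<lambda>t. g tc * alpha^3 / (tc - t)^3)"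
    using asymp_equiv_mult[OF asymp_equiv_refl asymp_equiv_power[OF E2, of 3]] by (simp add: power_divide)
  with E3 have E3': "s3 \<sim>[at_left tc] (\<lambda>t. g tc * (s2 t)^3)"
    by (blast intro: asymp_equiv_trans asymp_equiv_symI)
  have "(\<lambda>t. 3 * (g tc)^2 * (s2 t)^5) \<sim>[at_left tc] (\<lambda>t. 3 * (g tc)^2 * alpha^5 / (tc - t)^5)"
    using asymp_equiv_mult[OF asymp_equiv_refl asymp_equiv_power[OF E2, of 5]] by (simp add: power_divide)
  with E4 have E4': "s4 \<sim>[at_left tc] (\<lambda>t. 3 * (g tc)^2 * (s2 t)^5)"
    by (blast intro: asymp_equiv_trans asymp_equiv_symI)
  from E2 E3 E3' E4 E4' R2 R3 R4 show ?thesis unfolding one_plus_O_def by blast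
qed

end

theorem theorem3p1:
  fixes x s2 f g :: "real \<Rightarrow> real" and tc \<alpha> \<beta> :: real
  assumes x_ode: "xbar_ode x"
    and x_range: "\<forall>t\<ge>0. 0 < x t \<and> x t \<le> 1"
    and tc_pos: "0 < tc"
    and s2: "s2_sol x tc s2"
    and s2_explodes: "filterlim s2 at_top (at_left tc)"
    and f: "f_sol x tc f"
    and g: "g_sol x f tc g"
    and \<alpha>_def: "\<alpha> = 1 / (1 - (x tc)^2)"
    and \<beta>_def: "\<beta> = g tc"
  shows "(\<exists>s3 s4. s_system_sol x tc s2 s3 s4)
    \<and> (\<forall>a2 a3 a4 b2 b3 b4. s_system_sol x tc a2 a3 a4 \<longrightarrow> s_system_sol x tc b2 b3 b4 \<longrightarrow>
          (\<forall>t\<in>{0..<tc}. a2 t = b2 t \<and> a3 t = b3 t \<and> a4 t = b4 t))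
    \<and> 0 < \<alpha> \<and> 0 < \<beta>
    \<and> (\<forall>s3 s4. s_system_sol x tc s2 s3 s4 \<longrightarrow>
         s2 \<sim>[at_left tc] (\<lambda>t. \<alpha> / (tc - t))
       \<and> s3 \<sim>[at_left tc] (\<lambda>t. \<beta> * (s2 t)^3)
       \<and> s3 \<sim>[at_left tc] (\<lambda>t. \<beta> * \<alpha>^3 / (tc - t)^3)
       \<and> s4 \<sim>[at_left tc] (\<lambda>t. 3 * \<beta>^2 * (s2 t)^5)
       \<and> s4 \<sim>[at_left tc] (\<lambda>t. 3 * \<beta>^2 * \<alpha>^5 / (tc - t)^5)
       \<and> (\<lambda>t. s2 t / (\<alpha> * (tc - t) powi (-1)) - 1) \<in> O[at_left tc](\<lambda>t. tc - t)
       \<and> (\<lambda>t. s3 t / (\<beta> * \<alpha>^3 * (tc - t) powi (-3)) - 1) \<in> O[at_left tc](\<lambda>t. tc - t)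
       \<and> (\<lambda>t. s4 t / (3 * \<beta>^2 * \<alpha>^5 * (tc - t) powi (-5)) - 1) \<in> O[at_left tc](\<lambda>t. tc - t))"
proof -
  interpret moment_blowup x s2 f g tc
    using x_ode x_range tc_pos s2 s2_explodes f g by unfold_locales
  have alpha_eq: "\<alpha> = alpha" by (simp add: \<alpha>_def alpha_def)
  have "\<exists>s3 s4. s_system_sol x tc s2 s3 s4" using moment_system_solvable by blast
  then show ?thesis
    using moment_system_unique alpha_pos g_tc_pos moment_asymptotics
    unfolding alpha_eq \<beta>_def by blast
qed

end
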